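(* Let $\mathcal{I}=(N,M,\mathcal{V})$ be an ordered instance with $n$ agents and goods $M=[m]$, and let $i\in N$. (1) If $g_1\ge 2n-1$, $g_2\ge 2n$ and $g_3\ge 2n+1$ are goods, then $\mathrm{MMS}^{n-1}_{v_i}(M\setminus\{g_1,g_2,g_3\})\ge\mathrm{MMS}^n_{v_i}(M)$. (2) If $g_1\ge 3n-2$, $g_2\ge 3n-1$, $g_3\ge 3n$ and $g_4\ge 3n+1$ are goods, then $\mathrm{MMS}^{n-1}_{v_i}(M\setminus\{g_1,g_2,g_3,g_4\})\ge\mathrm{MMS}^n_{v_i}(M)$.
   Context: Valuations are additive; the instance is ordered if $v_i(1)\ge v_i(2)\ge\dots\ge v_i(m)$ for all agents $i$. $\mathrm{MMS}^d_v(S)$ is the maximum over all partitions of $S$ into $d$ (possibly empty) bundles of the minimum bundle value under $v$. *)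

theory Defs
  imports Complex_Main
begin

definition is_d_partition :: "nat \<Rightarrow> nat set \<Rightarrow> (nat \<Rightarrow> nat set) \<Rightarrow> bool" where
  "is_d_partition d S P \<longleftrightarrow>
     (\<Union>k<d. P k) = S \<and> (\<forall>k<d. \<forall>l<d. k \<noteq> l \<longrightarrow> P k \<inter> P l = {})"

definition MMS :: "nat \<Rightarrow> (nat \<Rightarrow> real) \<Rightarrow> nat set \<Rightarrow> real" where
  "MMS d v S = Sup {Min ((\<lambda>k. \<Sum>g\<in>P k. v g) ` {..<d}) | P. is_d_partition d S P}"

definition ordered_instance :: "nat \<Rightarrow> nat \<Rightarrow> (nat \<Rightarrow> nat \<Rightarrow> real) \<Rightarrow> bool" where
  "ordered_instance n m V \<longleftrightarrow>
     (\<forall>i\<in>{1..n}. (\<forall>g\<in>{1..m}. V i g \<ge> 0) \<and>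
        (\<forall>g h. 1 \<le> g \<longrightarrow> g \<le> h \<longrightarrow> h \<le> m \<longrightarrow> V i h \<le> V i g))"

end

theory Submission
  imports Defs
begin

text \<open>Let G be a set of k + 1 goods whose indices all exceed t = k(d - 1), so that in an ordered
  instance each of them is worth at most any good of {1..t}. In any partition of the goods into
  d bundles, the t + k + 1 = d k + 1 goods of {1..t} and G cannot be spread with at most k per
  bundle, so some bundle B contains more than k of them; hence B contains at least as many goods
  of {1..t} as there are goods of G outside B. Dissolve B: replace every good of G outside B by
  its own such good of B, which is worth at least as much, and put the rest of B into any other
  bundle. This yields a partition of the goods outside G into d - 1 bundles, none worth less
  than before. Parts (1) and (2) are the cases k = 2 and k = 3 with d = n.\<close>

definition bundle_min :: "nat \<Rightarrow> (nat \<Rightarrow> real) \<Rightarrow> (nat \<Rightarrow> nat set) \<Rightarrow> real" where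
  "bundle_min d v P = Min ((\<lambda>k. \<Sum>g\<in>P k. v g) ` {..<d})"

lemma MMS_eq_Sup_bundle_min:
  "MMS d v S = Sup {bundle_min d v P | P. is_d_partition d S P}"
  by (simp add: MMS_def bundle_min_def)

lemma bundle_min_le: "k < d \<Longrightarrow> bundle_min d v P \<le> sum v (P k)"
  unfolding bundle_min_def by (rule Min_le) auto

lemma le_bundle_min:
  assumes "0 < d" and "\<And>k. k < d \<Longrightarrow> c \<le> sum v (P k)"
  shows "c \<le> bundle_min d v P"
  unfolding bundle_min_def using assms by (intro Min.boundedI) auto

lemma is_d_partition_subset: "is_d_partition d S P \<Longrightarrow> k < d \<Longrightarrow> P k \<subseteq> S"
  unfolding is_d_partition_def by blast

lemma is_d_partition_single_bundle: "0 < d \<Longrightarrow> is_d_partition d S (\<lambda>k. if k = 0 then S else {})"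
  unfolding is_d_partition_def by auto

lemma is_d_partition_fibres:
  assumes "\<And>x. x \<in> S \<Longrightarrow> h x < d"
  shows "is_d_partition d S (\<lambda>j. {x \<in> S. h x = j})"
  unfolding is_d_partition_def using assms by auto

lemma bundle_min_le_sum:
  assumes "is_d_partition d S P" "0 < d" "finite S" "\<And>g. g \<in> S \<Longrightarrow> 0 \<le> v g"
  shows "bundle_min d v P \<le> sum v S"
proof -
  have "bundle_min d v P \<le> sum v (P 0)" using assms(2) by (rule bundle_min_le)
  also have "\<dots> \<le> sum v S"
    using assms is_d_partition_subset[OF assms(1,2)] by (intro sum_mono2) auto
  finally show ?thesis .
qed

lemma MMS_le_MMS:
  assumes "0 < d" "0 < d'" "finite S'" "\<And>g. g \<in> S' \<Longrightarrow> 0 \<le> v g"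
    and improve: "\<And>P. is_d_partition d S P \<Longrightarrow>
       \<exists>Q. is_d_partition d' S' Q \<and> bundle_min d v P \<le> bundle_min d' v Q"
  shows "MMS d v S \<le> MMS d' v S'"
  unfolding MMS_eq_Sup_bundle_min
proof (rule cSup_least)
  show "{bundle_min d v P | P. is_d_partition d S P} \<noteq> {}"
    using is_d_partition_single_bundle[OF assms(1)] by blast
next
  let ?A' = "{bundle_min d' v Q | Q. is_d_partition d' S' Q}"
  have "bdd_above ?A'"
    using bundle_min_le_sum[of d' S' _ v] assms(2-4) by (intro bdd_aboveI[where M = "sum v S'"]) blast
  fix x assume "x \<in> {bundle_min d v P | P. is_d_partition d S P}"
  then obtain Q where "is_d_partition d' S' Q" "x \<le> bundle_min d' v Q"
    using improve by blast
  then show "x \<le> Sup ?A'" using cSup_upper2[OF _ _ \<open>bdd_above ?A'\<close>] by blast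
qed

lemma partition_pigeonhole:
  assumes P: "is_d_partition d S P" and "T \<subseteq> S" "finite T" "d * r < card T"
  shows "\<exists>b<d. r < card (P b \<inter> T)"
proof (rule ccontr)
  assume "\<not> ?thesis"
  then have small: "card (P j \<inter> T) \<le> r" if "j < d" for j
    using that not_less by blast
  have "T = (\<Union>j<d. P j \<inter> T)"
    using P \<open>T \<subseteq> S\<close> unfolding is_d_partition_def by blast
  then have "card T = card (\<Union>j<d. P j \<inter> T)" by simp
  also have "\<dots> = (\<Sum>j<d. card (P j \<inter> T))"
    using P \<open>finite T\<close> unfolding is_d_partition_def by (intro card_UN_disjoint) auto
  also have "\<dots> \<le> (\<Sum>j<d. r)" using small by (intro sum_mono) simp
  finally show False using assms(4) by simp
qed

definition bundle_index :: "nat \<Rightarrow> (nat \<Rightarrow> nat set) \<Rightarrow> nat \<Rightarrow> nat" where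
  "bundle_index d P x = (THE j. j < d \<and> x \<in> P j)"

lemma bundle_index_eqI:
  assumes "is_d_partition d S P" "j < d" "x \<in> P j"
  shows "bundle_index d P x = j"
  unfolding bundle_index_def
  using assms unfolding is_d_partition_def by (intro the_equality) auto

lemma bundle_index:
  assumes "is_d_partition d S P" "x \<in> S"
  shows bundle_index_less: "bundle_index d P x < d"
    and mem_bundle_index: "x \<in> P (bundle_index d P x)"
proof -
  obtain j where "j < d" "x \<in> P j" using assms unfolding is_d_partition_def by blast
  then show "bundle_index d P x < d" "x \<in> P (bundle_index d P x)"
    using bundle_index_eqI[OF assms(1)] by auto
qed

lemma sum_le_sum_exchange:
  fixes v :: "'a \<Rightarrow> real"
  assumes "finite A" "inj_on f (A \<inter> G)" "f ` (A \<inter> G) \<inter> (A - G) = {}"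
    and "\<And>g. g \<in> A \<inter> G \<Longrightarrow> v g \<le> v (f g)"
  shows "sum v A \<le> sum v ((A - G) \<union> f ` (A \<inter> G))"
proof -
  have "sum v A = sum v (A \<inter> G) + sum v (A - G)"
    using sum.Int_Diff[OF assms(1)] by blast
  also have "sum v (A \<inter> G) \<le> sum (v \<circ> f) (A \<inter> G)"
    using assms(4) by (intro sum_mono) auto
  also have "\<dots> = sum v (f ` (A \<inter> G))"
    by (simp add: sum.reindex[OF assms(2)])
  also have "sum v (f ` (A \<inter> G)) + sum v (A - G) = sum v ((A - G) \<union> f ` (A \<inter> G))"
    using assms(1,3) by (subst sum.union_disjoint) auto
  finally show ?thesis by simp
qed

lemma exists_partition_avoiding_bundle:
  assumes "2 \<le> d" "b < d"
    and h: "\<And>x. x \<in> S \<Longrightarrow> h x < d \<and> h x \<noteq> b"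
    and c: "\<And>j. j < d \<Longrightarrow> j \<noteq> b \<Longrightarrow> c \<le> sum v {x \<in> S. h x = j}"
  shows "\<exists>Q. is_d_partition (d - 1) S Q \<and> c \<le> bundle_min (d - 1) v Q"
proof -
  define h' where "h' x = (if h x = d - 1 then b else h x)" for x
  have "h' x < d - 1" if "x \<in> S" for x
    using h[OF that] \<open>b < d\<close> unfolding h'_def by auto
  then have "is_d_partition (d - 1) S (\<lambda>j. {x \<in> S. h' x = j})"
    by (rule is_d_partition_fibres)
  moreover have "c \<le> bundle_min (d - 1) v (\<lambda>j. {x \<in> S. h' x = j})"
  proof (rule le_bundle_min)
    fix j assume "j < d - 1"
    define j' where "j' = (if j = b then d - 1 else j)"
    have "{x \<in> S. h' x = j} = {x \<in> S. h x = j'}"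
      using h \<open>j < d - 1\<close> unfolding h'_def j'_def by auto
    moreover have "j' < d" "j' \<noteq> b" using \<open>j < d - 1\<close> \<open>b < d\<close> unfolding j'_def by auto
    ultimately show "c \<le> sum v {x \<in> S. h' x = j}" using c by simp
  qed (use \<open>2 \<le> d\<close> in simp)
  ultimately show ?thesis by blast
qed

text \<open>Where a good goes when bundle b is dissolved and every good g of G outside b is traded for
  the good f g of b: f g takes the place of g, and the other goods of b go to bundle 0 or 1.\<close>
definition dissolve_index ::
    "nat \<Rightarrow> (nat \<Rightarrow> nat set) \<Rightarrow> nat \<Rightarrow> (nat \<Rightarrow> nat) \<Rightarrow> nat set \<Rightarrow> nat \<Rightarrow> nat" where
  "dissolve_index d P b f G x =
     (if x \<in> f ` (G - P b) then bundle_index d P (inv_into (G - P b) f x)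
      else if bundle_index d P x = b then (if b = 0 then 1 else 0)
      else bundle_index d P x)"

lemma dissolve_index_less:
  assumes P: "is_d_partition d S P" and "2 \<le> d" "G \<subseteq> S" "x \<in> S"
  shows "dissolve_index d P b f G x < d \<and> dissolve_index d P b f G x \<noteq> b"
proof (cases "x \<in> f ` (G - P b)")
  case True
  define y where "y = inv_into (G - P b) f x"
  have "y \<in> G - P b" unfolding y_def using True by (rule inv_into_into)
  then have "bundle_index d P y < d" "y \<in> P (bundle_index d P y)" "y \<notin> P b"
    using bundle_index[OF P, of y] \<open>G \<subseteq> S\<close> by auto
  moreover have "dissolve_index d P b f G x = bundle_index d P y"
    using True unfolding dissolve_index_def y_def by simp
  ultimately show ?thesis by metis
next
  case False
  then show ?thesis
    using bundle_index_less[OF P \<open>x \<in> S\<close>] \<open>2 \<le> d\<close> unfolding dissolve_index_def by auto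
qed

lemma sum_le_sum_dissolve_index:
  fixes v :: "nat \<Rightarrow> real"
  assumes P: "is_d_partition d S P" and "b < d" "finite S"
    and nonneg: "\<And>g. g \<in> S \<Longrightarrow> 0 \<le> v g"
    and f: "inj_on f (G - P b)" "f ` (G - P b) \<subseteq> P b - G"
    and better: "\<And>g. g \<in> G - P b \<Longrightarrow> v g \<le> v (f g)"
    and j: "j < d" "j \<noteq> b"
  shows "sum v (P j) \<le> sum v {x \<in> S - G. dissolve_index d P b f G x = j}"
proof -
  let ?Q = "{x \<in> S - G. dissolve_index d P b f G x = j}"
  have Pj: "P j \<subseteq> S" by (rule is_d_partition_subset[OF P \<open>j < d\<close>])
  have disj: "P j \<inter> P b = {}" using P j \<open>b < d\<close> unfolding is_d_partition_def by blast
  then have PjG: "P j \<inter> G \<subseteq> G - P b" by blast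
  have "sum v (P j) \<le> sum v ((P j - G) \<union> f ` (P j \<inter> G))"
  proof (rule sum_le_sum_exchange)
    show "finite (P j)" using Pj \<open>finite S\<close> by (rule finite_subset)
    show "inj_on f (P j \<inter> G)" using f(1) PjG by (rule inj_on_subset)
    show "f ` (P j \<inter> G) \<inter> (P j - G) = {}" using f(2) PjG disj by blast
  qed (use better PjG in blast)
  also have "\<dots> \<le> sum v ?Q"
  proof (rule sum_mono2)
    have "x \<in> ?Q" if x: "x \<in> P j - G" for x
    proof -
      have "x \<notin> f ` (G - P b)" using x f(2) disj by blast
      then have "dissolve_index d P b f G x = j"
        using bundle_index_eqI[OF P j(1)] x j(2) unfolding dissolve_index_def by simp
      then show ?thesis using x Pj by blast
    qed
    moreover have "f g \<in> ?Q" if "g \<in> P j \<inter> G" for g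
    proof -
      have g: "g \<in> G - P b" using that PjG by blast
      then have "f g \<in> P b - G" using f(2) by blast
      moreover have "dissolve_index d P b f G (f g) = j"
        using g inv_into_f_f[OF f(1) g] bundle_index_eqI[OF P j(1)] that
        unfolding dissolve_index_def by simp
      ultimately show ?thesis using is_d_partition_subset[OF P \<open>b < d\<close>] by auto
    qed
    ultimately show "(P j - G) \<union> f ` (P j \<inter> G) \<subseteq> ?Q" by blast
  qed (use \<open>finite S\<close> nonneg in auto)
  finally show ?thesis .
qed

lemma exists_partition_dissolving_bundle:
  assumes P: "is_d_partition d S P" and "2 \<le> d" "b < d" "finite S"
    and nonneg: "\<And>g. g \<in> S \<Longrightarrow> 0 \<le> v g"
    and "G \<subseteq> S" and f: "inj_on f (G - P b)" "f ` (G - P b) \<subseteq> P b - G"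
    and better: "\<And>g. g \<in> G - P b \<Longrightarrow> v g \<le> v (f g)"
  shows "\<exists>Q. is_d_partition (d - 1) (S - G) Q \<and> bundle_min d v P \<le> bundle_min (d - 1) v Q"
proof (rule exists_partition_avoiding_bundle[of d b "S - G" "dissolve_index d P b f G"])
  show "dissolve_index d P b f G x < d \<and> dissolve_index d P b f G x \<noteq> b" if "x \<in> S - G" for x
    using dissolve_index_less[OF P \<open>2 \<le> d\<close> \<open>G \<subseteq> S\<close>] that by blast
  show "bundle_min d v P \<le> sum v {x \<in> S - G. dissolve_index d P b f G x = j}"
    if "j < d" "j \<noteq> b" for j
    using bundle_min_le[OF \<open>j < d\<close>] sum_le_sum_dissolve_index[where v = v, OF P \<open>b < d\<close> \<open>finite S\<close> nonneg f
        better that] by (rule order_trans)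
qed (use assms in auto)

lemma exists_bundle_card_outside_le_card_inside:
  assumes P: "is_d_partition d S P" and "T \<union> G \<subseteq> S" "finite S" "T \<inter> G = {}"
    and "card G \<le> Suc k" "d * k < card T + card G"
  shows "\<exists>b<d. card (G - P b) \<le> card (P b \<inter> T)"
proof -
  have fin: "finite T" "finite G" using assms(2,3) finite_subset by auto
  obtain b where b: "b < d" "k < card (P b \<inter> (T \<union> G))"
    using partition_pigeonhole[OF P assms(2)] fin assms(4,6) by (auto simp: card_Un_disjoint)
  have "P b \<inter> (T \<union> G) = (P b \<inter> T) \<union> (G \<inter> P b)" by blast
  then have "card (P b \<inter> (T \<union> G)) = card (P b \<inter> T) + card (G \<inter> P b)"
    using fin assms(4) by (simp add: card_Un_disjoint disjoint_iff)
  moreover have "card (G - P b) = card G - card (G \<inter> P b)"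
    using card_Diff_subset_Int[of G "P b"] fin by simp
  ultimately show ?thesis using b assms(5) by (intro exI[of _ b]) linarith
qed

lemma exists_partition_removing_low_ranked_goods:
  fixes v :: "nat \<Rightarrow> real"
  assumes nonneg: "\<And>g. g \<in> {1..m} \<Longrightarrow> 0 \<le> v g"
    and antitone: "\<And>g h. 1 \<le> g \<Longrightarrow> g \<le> h \<Longrightarrow> h \<le> m \<Longrightarrow> v h \<le> v g"
    and "2 \<le> d" and G: "G \<subseteq> {1..m}" "card G = Suc k" "\<forall>g\<in>G. k * (d - 1) < g"
    and P: "is_d_partition d {1..m} P"
  shows "\<exists>Q. is_d_partition (d - 1) ({1..m} - G) Q \<and> bundle_min d v P \<le> bundle_min (d - 1) v Q"
proof -
  define t where "t = k * (d - 1)"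
  have disj: "{1..t} \<inter> G = {}" using G(3) unfolding t_def by auto
  obtain g0 where "g0 \<in> G" using G(2) by (cases "G = {}") auto
  then have "{1..t} \<union> G \<subseteq> {1..m}" using G unfolding t_def by fastforce
  moreover have "d * k < card {1..t} + card G" using \<open>2 \<le> d\<close> G(2) unfolding t_def
    by (cases d) (auto simp: algebra_simps)
  ultimately obtain b where b: "b < d" "card (G - P b) \<le> card (P b \<inter> {1..t})"
    using exists_bundle_card_outside_le_card_inside[OF P _ _ disj] G(2) by auto
  then obtain X where X: "X \<subseteq> P b \<inter> {1..t}" "card X = card (G - P b)"
    by (meson obtain_subset_with_card_n)
  moreover have "finite (G - P b)" using G(1) finite_subset by blast
  ultimately obtain f where f: "bij_betw f (G - P b) X"
    using finite_same_card_bij[of "G - P b" X] finite_subset[of X "{1..t}"] by auto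
  show ?thesis
  proof (rule exists_partition_dissolving_bundle[OF P \<open>2 \<le> d\<close> b(1) _ nonneg G(1)])
    show "inj_on f (G - P b)" using f by (rule bij_betw_imp_inj_on)
    show "f ` (G - P b) \<subseteq> P b - G" using f X(1) disj bij_betw_imp_surj_on by blast
    show "v g \<le> v (f g)" if "g \<in> G - P b" for g
    proof (rule antitone)
      have "f g \<in> {1..t}" using f X(1) that bij_betwE by blast
      then show "1 \<le> f g" "f g \<le> g" using G(3) that unfolding t_def by auto
      show "g \<le> m" using G(1) that by auto
    qed
  qed simp
qed

lemma MMS_removing_low_ranked_goods:
  fixes v :: "nat \<Rightarrow> real"
  assumes nonneg: "\<And>g. g \<in> {1..m} \<Longrightarrow> 0 \<le> v g"
    and antitone: "\<And>g h. 1 \<le> g \<Longrightarrow> g \<le> h \<Longrightarrow> h \<le> m \<Longrightarrow> v h \<le> v g"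
    and "2 \<le> d" "G \<subseteq> {1..m}" "card G = Suc k" "\<forall>g\<in>G. k * (d - 1) < g"
  shows "MMS d v {1..m} \<le> MMS (d - 1) v ({1..m} - G)"
  using assms(3) nonneg
    exists_partition_removing_low_ranked_goods[OF nonneg antitone assms(3-6)]
  by (intro MMS_le_MMS) auto

theorem lemma15:
  fixes n m :: nat and V :: "nat \<Rightarrow> nat \<Rightarrow> real" and i :: nat
  assumes "ordered_instance n m V" and "n \<ge> 2" and "i \<in> {1..n}"
  shows "(\<forall>g1 g2 g3. g1 \<in> {1..m} \<and> g2 \<in> {1..m} \<and> g3 \<in> {1..m} \<and>
            distinct [g1, g2, g3] \<and>
            g1 \<ge> 2*n - 1 \<and> g2 \<ge> 2*n \<and> g3 \<ge> 2*n + 1 \<longrightarrow>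
            MMS (n - 1) (V i) ({1..m} - {g1, g2, g3}) \<ge> MMS n (V i) {1..m})
       \<and> (\<forall>g1 g2 g3 g4. g1 \<in> {1..m} \<and> g2 \<in> {1..m} \<and> g3 \<in> {1..m} \<and> g4 \<in> {1..m} \<and>
            distinct [g1, g2, g3, g4] \<and>
            g1 \<ge> 3*n - 2 \<and> g2 \<ge> 3*n - 1 \<and> g3 \<ge> 3*n \<and> g4 \<ge> 3*n + 1 \<longrightarrow>
            MMS (n - 1) (V i) ({1..m} - {g1, g2, g3, g4}) \<ge> MMS n (V i) {1..m})"
proof -
  have removing: "MMS n (V i) {1..m} \<le> MMS (n - 1) (V i) ({1..m} - G)"
    if "G \<subseteq> {1..m}" "card G = Suc k" "\<forall>g\<in>G. k * (n - 1) < g" for G k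
    using assms that unfolding ordered_instance_def
    by (intro MMS_removing_low_ranked_goods) auto
  show ?thesis
  proof (intro conjI allI impI)
    fix g1 g2 g3 assume "g1 \<in> {1..m} \<and> g2 \<in> {1..m} \<and> g3 \<in> {1..m} \<and>
      distinct [g1, g2, g3] \<and> g1 \<ge> 2*n - 1 \<and> g2 \<ge> 2*n \<and> g3 \<ge> 2*n + 1"
    then show "MMS (n - 1) (V i) ({1..m} - {g1, g2, g3}) \<ge> MMS n (V i) {1..m}"
      using \<open>n \<ge> 2\<close> by (intro removing[where k = 2]) auto
  next
    fix g1 g2 g3 g4 assume "g1 \<in> {1..m} \<and> g2 \<in> {1..m} \<and> g3 \<in> {1..m} \<and> g4 \<in> {1..m} \<and>
      distinct [g1, g2, g3, g4] \<and> g1 \<ge> 3*n - 2 \<and> g2 \<ge> 3*n - 1 \<and> g3 \<ge> 3*n \<and> g4 \<ge> 3*n + 1"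
    then show "MMS (n - 1) (V i) ({1..m} - {g1, g2, g3, g4}) \<ge> MMS n (V i) {1..m}"
      using \<open>n \<ge> 2\<close> by (intro removing[where k = 3]) auto
  qed
qed

end
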